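(* There is an absolute constant $C>0$ such that the following holds. Let $n\geq 1$, let $a=(a_1,\dots,a_{2n})\in\mathbb{R}^{2n}$, and let $\sigma$ be a uniformly random permutation in the symmetric group $\Pi_{2n}$ of $\{1,\dots,2n\}$. Define $$f(\sigma)=\left|\sum_{i=1}^{n}a_{\sigma(i)}-\sum_{i=n+1}^{2n}a_{\sigma(i)}\right|.$$ Then for every $p\geq 2$, $$\left(\mathbb{E} f^p\right)^{1/p}\leq \mathbb{E}|f|+C\,p\,\|a\|_2,$$ where $\|a\|_2=\left(\sum_{i=1}^{2n}a_i^2\right)^{1/2}$ and $\mathbb{E}$ denotes expectation with respect to the uniform probability measure on $\Pi_{2n}$.
   Context: Equivalently, $\mathbb{E} f^p=\mathbb{E}\left|\sum_{i=1}^{2n}a_i\varepsilon_i\right|^p$ where $\varepsilon=(\varepsilon_1,\dots,\varepsilon_{2n})$ is uniformly distributed on the set $\{\varepsilon\in\{-1,1\}^{2n}:\sum_{i=1}^{2n}\varepsilon_i=0\}$ (Rademacher signs conditioned to sum to zero). *)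

theory Defs
  imports "HOL-Analysis.Analysis" "HOL-Combinatorics.Permutations"
begin

definition perms2n :: "nat \<Rightarrow> (nat \<Rightarrow> nat) set" where
  "perms2n n = {\<sigma>. \<sigma> permutes {1..2*n}}"

definition fperm :: "nat \<Rightarrow> (nat \<Rightarrow> real) \<Rightarrow> (nat \<Rightarrow> nat) \<Rightarrow> real" where
  "fperm n a \<sigma> = \<bar>(\<Sum>i=1..n. a (\<sigma> i)) - (\<Sum>i=n+1..2*n. a (\<sigma> i))\<bar>"

definition Eperm :: "nat \<Rightarrow> ((nat \<Rightarrow> nat) \<Rightarrow> real) \<Rightarrow> real" where
  "Eperm n g = (\<Sum>\<sigma>\<in>perms2n n. g \<sigma>) / real (card (perms2n n))"

definition norm2 :: "nat \<Rightarrow> (nat \<Rightarrow> real) \<Rightarrow> real" where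
  "norm2 n a = sqrt (\<Sum>i=1..2*n. (a i)^2)"

end

theory Submission
  imports Defs "HOL-Probability.Hoeffding"
begin

text \<open>
  Write the signed sum as S(\<sigma>) = \<Sum> i = 1..n. a(\<sigma> i) - a(\<sigma> (i + n)).
  Precomposing \<sigma> with the transposition of i and i + n flips the sign of the i-th pair
  difference and fixes all others, so averaging over \<sigma> turns exp (\<lambda> S) into a product of
  hyperbolic cosines. Since cosh x \<le> exp (x^2 / 2), this gives the sub-Gaussian bound
  E exp (\<lambda> S) \<le> exp (\<lambda>^2 \<parallel>a\<parallel>^2), and the elementary inequality
  \<bar>s\<bar>^p \<le> (p / e)^p exp \<bar>s\<bar> turns it into (E \<bar>S\<bar>^p) powr (1/p) \<le> 2 p \<parallel>a\<parallel>.
\<close>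

lemma cosh_le_exp_half_square: "cosh (x::real) \<le> exp (x\<^sup>2 / 2)"
proof -
  have "cosh y \<le> exp (y\<^sup>2 / 2)" if "y \<ge> 0" for y :: real
  proof -
    \<comment> \<open>Hoeffding's lemma for a fair sign, at the point \<open>2 y\<close>.\<close>
    have hoeffding: "-(2*y) * (1/2) + ln (1 + (1/2) * (exp (2*y) - 1)) \<le> (2*y)\<^sup>2 / 8"
      using Hoeffdings_lemma_aux[of "2*y" "1/2"] that by simp
    have "1 + (1/2) * (exp (2*y) - 1) = exp y * cosh y"
      by (simp add: cosh_def exp_minus field_simps flip: exp_add)
    moreover have "cosh y > 0" by (simp add: cosh_real_pos)
    ultimately have "ln (cosh y) \<le> y\<^sup>2 / 2"
      using hoeffding by (simp add: ln_mult power2_eq_square)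
    with \<open>cosh y > 0\<close> show ?thesis by (metis exp_le_cancel_iff exp_ln)
  qed
  from this[of x] this[of "-x"] show ?thesis by (cases "x \<ge> 0") simp_all
qed

lemma abs_powr_le_exp_sum:
  fixes s N p :: real
  assumes "N > 0" and "p > 0"
  shows "\<bar>s\<bar> powr p \<le> (N * p / exp 1) powr p * (exp (s/N) + exp (-s/N))"
proof (cases "s = 0")
  case True then show ?thesis by simp
next
  case False
  define y where "y = \<bar>s\<bar> / N"
  have y: "y > 0" using False assms unfolding y_def by simp
  have "ln (y/p) \<le> y/p - 1" using y assms by (intro ln_le_minus_one) simp
  then have "p * ln (y/p) \<le> p * (y/p - 1)" using assms by (intro mult_left_mono) auto
  then have "p * ln y \<le> p * ln (p / exp 1) + y" using y assms by (simp add: ln_div algebra_simps)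
  then have "y powr p \<le> (p / exp 1) powr p * exp y"
    using y assms by (simp add: powr_def flip: exp_add)
  moreover have "exp y \<le> exp (s/N) + exp (-s/N)"
    unfolding y_def by (cases "s \<ge> 0") (auto simp: add_increasing add_increasing2)
  ultimately have "y powr p \<le> (p / exp 1) powr p * (exp (s/N) + exp (-s/N))"
    by (meson mult_left_mono order_trans powr_ge_zero)
  then have "N powr p * y powr p \<le> N powr p * ((p / exp 1) powr p * (exp (s/N) + exp (-s/N)))"
    by (simp add: mult_left_mono)
  moreover have "\<bar>s\<bar> powr p = N powr p * y powr p"
    unfolding y_def using assms by (simp add: powr_mult[symmetric])
  moreover have "(N * p / exp 1) powr p = N powr p * (p / exp 1) powr p"
    using assms by (simp add: powr_mult[symmetric] times_divide_eq_right)
  ultimately show ?thesis by (simp add: mult.assoc)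
qed

lemma average_abs_powr_le_of_mgf_le:
  fixes g :: "'a \<Rightarrow> real"
  assumes "finite A" "A \<noteq> {}" "N > 0" "p \<ge> 1"
    and mgf: "\<And>l. (\<Sum>x\<in>A. exp (l * g x)) \<le> card A * exp (l\<^sup>2 * N\<^sup>2)"
  shows "((\<Sum>x\<in>A. \<bar>g x\<bar> powr p) / card A) powr (1/p) \<le> 2 * p * N"
proof -
  define K where "K = (N * p / exp 1) powr p"
  have "(\<Sum>x\<in>A. \<bar>g x\<bar> powr p) \<le> (\<Sum>x\<in>A. K * (exp ((1/N) * g x) + exp ((-1/N) * g x)))"
    unfolding K_def using abs_powr_le_exp_sum[OF \<open>N > 0\<close>] \<open>p \<ge> 1\<close> by (intro sum_mono) auto
  also have "\<dots> = K * ((\<Sum>x\<in>A. exp ((1/N) * g x)) + (\<Sum>x\<in>A. exp ((-1/N) * g x)))"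
    by (simp add: sum_distrib_left sum.distrib distrib_left)
  also have "\<dots> \<le> K * (card A * exp 1 + card A * exp 1)"
    using mgf[of "1/N"] mgf[of "-1/N"] \<open>N > 0\<close> unfolding K_def
    by (intro mult_left_mono add_mono) (simp_all add: power_divide)
  finally have moment: "(\<Sum>x\<in>A. \<bar>g x\<bar> powr p) / card A \<le> K * (2 * exp 1)"
    using assms by (simp add: divide_simps algebra_simps)
  have "((\<Sum>x\<in>A. \<bar>g x\<bar> powr p) / card A) powr (1/p) \<le> (K * (2 * exp 1)) powr (1/p)"
    using moment \<open>p \<ge> 1\<close> by (intro powr_mono2 divide_nonneg_nonneg sum_nonneg) auto
  also have "\<dots> = (N * p / exp 1) * (2 * exp 1) powr (1/p)"
    unfolding K_def using assms by (simp add: powr_mult powr_powr)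
  also have "(2 * exp 1) powr (1/p) \<le> (2 * exp 1) powr 1"
    using \<open>p \<ge> 1\<close> exp_ge_add_one_self[of "1::real"] by (intro powr_mono) auto
  finally show ?thesis
    using assms by (simp add: field_simps)
qed

lemma sum_exp_eq_sum_cosh_if_involution:
  fixes b G :: "'a \<Rightarrow> real"
  assumes "\<And>x. x \<in> A \<Longrightarrow> t x \<in> A" "\<And>x. x \<in> A \<Longrightarrow> t (t x) = x"
    and "\<And>x. x \<in> A \<Longrightarrow> b (t x) = - b x" "\<And>x. x \<in> A \<Longrightarrow> G (t x) = G x"
  shows "(\<Sum>x\<in>A. exp (b x) * G x) = (\<Sum>x\<in>A. cosh (b x) * G x)"
proof -
  have "(\<Sum>x\<in>A. exp (b x) * G x) = (\<Sum>x\<in>A. exp (b (t x)) * G (t x))"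
    by (rule sum.reindex_bij_witness[where i=t and j=t]) (use assms in auto)
  also have "\<dots> = (\<Sum>x\<in>A. exp (- b x) * G x)"
    using assms by (intro sum.cong) auto
  moreover have "(\<Sum>x\<in>A. cosh (b x) * G x)
      = ((\<Sum>x\<in>A. exp (b x) * G x) + (\<Sum>x\<in>A. exp (- b x) * G x)) / 2"
    by (simp add: cosh_field_def sum_divide_distrib[symmetric] sum.distrib[symmetric] algebra_simps)
  ultimately show ?thesis by simp
qed

definition signed_sum :: "nat \<Rightarrow> (nat \<Rightarrow> real) \<Rightarrow> (nat \<Rightarrow> nat) \<Rightarrow> real" where
  "signed_sum n a \<sigma> = (\<Sum>i=1..n. a (\<sigma> i)) - (\<Sum>i=n+1..2*n. a (\<sigma> i))"

definition pair_diff :: "nat \<Rightarrow> (nat \<Rightarrow> real) \<Rightarrow> (nat \<Rightarrow> nat) \<Rightarrow> nat \<Rightarrow> real" where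
  "pair_diff n a \<sigma> i = a (\<sigma> i) - a (\<sigma> (i+n))"

lemma signed_sum_eq_sum_pair_diff: "signed_sum n a \<sigma> = (\<Sum>i=1..n. pair_diff n a \<sigma> i)"
proof -
  have "(\<Sum>i=n+1..2*n. a (\<sigma> i)) = (\<Sum>i=1+n..n+n. a (\<sigma> i))" by (simp add: mult_2 add.commute)
  also have "\<dots> = (\<Sum>i=1..n. a (\<sigma> (i+n)))" by (rule sum.shift_bounds_cl_nat_ivl)
  finally show ?thesis unfolding signed_sum_def pair_diff_def by (simp add: sum_subtractf)
qed

lemma pair_diff_comp_transpose:
  assumes "i \<in> {1..n}" "j \<in> {1..n}"
  shows "pair_diff n a (\<sigma> \<circ> Transposition.transpose j (j+n)) i
           = (if i = j then - pair_diff n a \<sigma> i else pair_diff n a \<sigma> i)"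
  using assms unfolding pair_diff_def by (auto simp: Transposition.transpose_def)

lemma comp_transpose_in_perms2n:
  assumes "\<sigma> \<in> perms2n n" "j \<in> {1..n}"
  shows "\<sigma> \<circ> Transposition.transpose j (j+n) \<in> perms2n n"
proof -
  have "Transposition.transpose j (j+n) permutes {1..2*n}"
    using assms(2) by (intro permutes_swap_id) auto
  with assms(1) show ?thesis unfolding perms2n_def by (simp add: permutes_compose)
qed

lemma sum_exp_pair_diff_eq_sum_prod_cosh:
  assumes "J \<subseteq> {1..n}"
  shows "(\<Sum>\<sigma>\<in>perms2n n. exp (l * (\<Sum>i=1..n. pair_diff n a \<sigma> i)))
       = (\<Sum>\<sigma>\<in>perms2n n. exp (l * (\<Sum>i\<in>{1..n}-J. pair_diff n a \<sigma> i))
                            * (\<Prod>i\<in>J. cosh (l * pair_diff n a \<sigma> i)))"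
  using finite_subset[OF assms finite_atLeastAtMost] assms
proof (induction J rule: finite_subset_induct')
  case empty then show ?case by simp
next
  case (insert j J)
  define G where "G \<sigma> = exp (l * (\<Sum>i\<in>{1..n}-insert j J. pair_diff n a \<sigma> i))
                         * (\<Prod>i\<in>J. cosh (l * pair_diff n a \<sigma> i))" for \<sigma>
  have split: "{1..n} - J = insert j ({1..n} - insert j J)" using insert by auto
  have "(\<Sum>\<sigma>\<in>perms2n n. exp (l * (\<Sum>i\<in>{1..n}-J. pair_diff n a \<sigma> i))
                         * (\<Prod>i\<in>J. cosh (l * pair_diff n a \<sigma> i)))
      = (\<Sum>\<sigma>\<in>perms2n n. exp (l * pair_diff n a \<sigma> j) * G \<sigma>)"
    unfolding G_def split by (intro sum.cong) (simp_all add: distrib_left exp_add)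
  also have "\<dots> = (\<Sum>\<sigma>\<in>perms2n n. cosh (l * pair_diff n a \<sigma> j) * G \<sigma>)"
  proof (rule sum_exp_eq_sum_cosh_if_involution[where t="\<lambda>\<sigma>. \<sigma> \<circ> Transposition.transpose j (j+n)"])
    fix \<sigma>
    have "j \<in> {1..n}" "J \<subseteq> {1..n}" "j \<notin> J" using insert by auto
    then show "G (\<sigma> \<circ> Transposition.transpose j (j+n)) = G \<sigma>"
      unfolding G_def
      by (intro arg_cong2[where f="(*)"] arg_cong[where f=exp] arg_cong[where f="(*) l"]
            sum.cong prod.cong) (auto simp: pair_diff_comp_transpose)
  qed (use insert in \<open>auto simp: comp_transpose_in_perms2n pair_diff_comp_transpose
                                  o_assoc[symmetric] Transposition.transpose_def fun_eq_iff\<close>)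
  finally show ?case
    using insert by (simp add: G_def algebra_simps)
qed

lemma sum_pair_diff_sq_le:
  assumes "\<sigma> \<in> perms2n n"
  shows "(\<Sum>i=1..n. (pair_diff n a \<sigma> i)\<^sup>2) \<le> 2 * (norm2 n a)\<^sup>2"
proof -
  have "(\<Sum>i=1..n. (pair_diff n a \<sigma> i)\<^sup>2) \<le> (\<Sum>i=1..n. 2 * ((a (\<sigma> i))\<^sup>2 + (a (\<sigma> (i+n)))\<^sup>2))"
    unfolding pair_diff_def
    by (intro sum_mono) (smt (verit) power2_diff power2_sum zero_le_power2)
  also have "\<dots> = 2 * ((\<Sum>i=1..n. (a (\<sigma> i))\<^sup>2) + (\<Sum>i=1..n. (a (\<sigma> (i+n)))\<^sup>2))"
    by (simp add: sum.distrib sum_distrib_left)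
  also have "(\<Sum>i=1..n. (a (\<sigma> (i+n)))\<^sup>2) = (\<Sum>i=1+n..n+n. (a (\<sigma> i))\<^sup>2)"
    by (rule sum.shift_bounds_cl_nat_ivl[symmetric])
  also have "(\<Sum>i=1..n. (a (\<sigma> i))\<^sup>2) + (\<Sum>i=1+n..n+n. (a (\<sigma> i))\<^sup>2) = (\<Sum>i=1..2*n. (a (\<sigma> i))\<^sup>2)"
    using sum.ub_add_nat[of 1 n "\<lambda>i. (a (\<sigma> i))\<^sup>2" n] by (simp add: mult_2 add.commute)
  also have "\<dots> = (\<Sum>i=1..2*n. (a i)\<^sup>2)"
    using assms unfolding perms2n_def by (simp add: sum.permute[of \<sigma> _ "\<lambda>i. (a i)\<^sup>2"] comp_def)
  also have "\<dots> = (norm2 n a)\<^sup>2"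
    unfolding norm2_def by (simp add: sum_nonneg)
  finally show ?thesis by simp
qed

lemma sum_exp_signed_sum_le:
  "(\<Sum>\<sigma>\<in>perms2n n. exp (l * signed_sum n a \<sigma>)) \<le> card (perms2n n) * exp (l\<^sup>2 * (norm2 n a)\<^sup>2)"
proof -
  have "(\<Sum>\<sigma>\<in>perms2n n. exp (l * signed_sum n a \<sigma>))
      = (\<Sum>\<sigma>\<in>perms2n n. \<Prod>i=1..n. cosh (l * pair_diff n a \<sigma> i))"
    using sum_exp_pair_diff_eq_sum_prod_cosh[of "{1..n}" n l a]
    by (simp add: signed_sum_eq_sum_pair_diff)
  also have "\<dots> \<le> (\<Sum>\<sigma>\<in>perms2n n. exp (l\<^sup>2 * (norm2 n a)\<^sup>2))"
  proof (rule sum_mono)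
    fix \<sigma> assume \<sigma>: "\<sigma> \<in> perms2n n"
    have "(\<Prod>i=1..n. cosh (l * pair_diff n a \<sigma> i)) \<le> (\<Prod>i=1..n. exp ((l * pair_diff n a \<sigma> i)\<^sup>2 / 2))"
      by (intro prod_mono conjI cosh_le_exp_half_square) (simp add: cosh_real_nonneg)
    also have "\<dots> = exp (l\<^sup>2 / 2 * (\<Sum>i=1..n. (pair_diff n a \<sigma> i)\<^sup>2))"
      by (simp add: exp_sum sum_distrib_left power_mult_distrib)
    also have "\<dots> \<le> exp (l\<^sup>2 * (norm2 n a)\<^sup>2)"
      using mult_left_mono[OF sum_pair_diff_sq_le[OF \<sigma>], of "l\<^sup>2 / 2"] by simp
    finally show "(\<Prod>i=1..n. cosh (l * pair_diff n a \<sigma> i)) \<le> exp (l\<^sup>2 * (norm2 n a)\<^sup>2)" .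
  qed
  finally show ?thesis by simp
qed

lemma signed_sum_eq_0_if_norm2_eq_0:
  assumes "norm2 n a = 0" "\<sigma> \<in> perms2n n"
  shows "signed_sum n a \<sigma> = 0"
proof -
  have "\<forall>i\<in>{1..2*n}. (a i)\<^sup>2 = 0"
    using assms(1) unfolding norm2_def by (simp add: sum_nonneg sum_nonneg_eq_0_iff)
  moreover have "\<sigma> i \<in> {1..2*n}" if "i \<in> {1..2*n}" for i
    using assms(2) that permutes_in_image unfolding perms2n_def by fastforce
  ultimately show ?thesis
    unfolding signed_sum_def by (simp add: sum.neutral)
qed

lemma Eperm_fperm_powr_le:
  assumes "p \<ge> 1"
  shows "(Eperm n (\<lambda>\<sigma>. fperm n a \<sigma> powr p)) powr (1/p) \<le> 2 * p * norm2 n a"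
proof -
  have fin: "finite (perms2n n)" unfolding perms2n_def by (simp add: finite_permutations)
  have ne: "perms2n n \<noteq> {}" unfolding perms2n_def using permutes_id by blast
  have f: "fperm n a = (\<lambda>\<sigma>. \<bar>signed_sum n a \<sigma>\<bar>)" unfolding fperm_def signed_sum_def ..
  have "norm2 n a \<ge> 0" unfolding norm2_def by (simp add: sum_nonneg)
  then consider "norm2 n a = 0" | "norm2 n a > 0" by linarith
  then show ?thesis
  proof cases
    case 1
    then show ?thesis
      using assms by (simp add: Eperm_def f signed_sum_eq_0_if_norm2_eq_0)
  next
    case 2
    from average_abs_powr_le_of_mgf_le[OF fin ne 2 assms sum_exp_signed_sum_le]
    show ?thesis unfolding Eperm_def f .
  qed
qed

theorem theorem1p1:
  shows "\<exists>C>0. \<forall>n::nat. \<forall>a::nat \<Rightarrow> real. \<forall>p::real.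
           n \<ge> 1 \<longrightarrow> p \<ge> 2 \<longrightarrow>
           (Eperm n (\<lambda>\<sigma>. fperm n a \<sigma> powr p)) powr (1/p)
             \<le> Eperm n (\<lambda>\<sigma>. \<bar>fperm n a \<sigma>\<bar>) + C * p * norm2 n a"
proof (intro exI[of _ 2] conjI allI impI)
  fix n :: nat and a :: "nat \<Rightarrow> real" and p :: real
  assume "p \<ge> 2"
  have "Eperm n (\<lambda>\<sigma>. \<bar>fperm n a \<sigma>\<bar>) \<ge> 0"
    unfolding Eperm_def by (intro divide_nonneg_nonneg sum_nonneg) auto
  with Eperm_fperm_powr_le[of p n a] \<open>p \<ge> 2\<close>
  show "(Eperm n (\<lambda>\<sigma>. fperm n a \<sigma> powr p)) powr (1/p)
          \<le> Eperm n (\<lambda>\<sigma>. \<bar>fperm n a \<sigma>\<bar>) + 2 * p * norm2 n a"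
    by linarith
qed simp

end
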